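(* For every $k\in\mathbb Z$, $\mathcal A=\mathbb Z[\mathbb P][x_{k-1},x_k,x_{k+1},x_{k+2}]$.
   Context: Fix positive integers $\ell_1,\ell_2$ and independent variables $p_{i,k}$ ($i=1,2$, $1\le k\le\ell_i$), $p_{i,0}=1$. Let $\mathbb P$ be the group of Laurent monomials in the $p_{i,k}$ and $\mathbb Z[\mathbb P]$ its group ring; let $\mathcal F=\mathbb Q(p_{i,k})(x_1,x_2)$ with $x_1,x_2$ independent. Put $P_1(z)=1+\sum_{k=1}^{\ell_1}p_{1,k}z^k$, $P_2(z)=1+\sum_{k=1}^{\ell_2}p_{2,k}z^k$ and $\overline P_i(z)=z^{\ell_i}P_i(z^{-1})/p_{i,\ell_i}$. Define $x_k\in\mathcal F$ for all $k\in\mathbb Z$ from $x_1,x_2$ by $x_{k+1}x_{k-1}=P_1(x_k)$ if $k\equiv1$, $P_2(x_k)$ if $k\equiv2$, $\overline P_1(x_k)$ if $k\equiv3$, $\overline P_2(x_k)$ if $k\equiv0\pmod4$. Let $\mathcal A$ be the $\mathbb Z[\mathbb P]$-subalgebra of $\mathcal F$ generated by all $x_k$. *)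

theory Defs
  imports Complex_Main "HOL-Library.Poly_Mapping"
begin

(* Variables: PV i k stands for p_{i,k}; XV j stands for x_j. *)
datatype var = PV nat nat | XV nat

definition mpoly_eval :: "(('v \<Rightarrow>\<^sub>0 nat) \<Rightarrow>\<^sub>0 rat) \<Rightarrow> ('v \<Rightarrow> 'a::field_char_0) \<Rightarrow> 'a" where
  "mpoly_eval q v = (\<Sum>mon\<in>Poly_Mapping.keys q. of_rat (Poly_Mapping.lookup q mon) * (\<Prod>i\<in>Poly_Mapping.keys mon. v i ^ Poly_Mapping.lookup mon i))"

definition alg_indep_on :: "('v \<Rightarrow> 'a::field_char_0) \<Rightarrow> 'v set \<Rightarrow> bool" where
  "alg_indep_on v V \<longleftrightarrow>
     (\<forall>q. (\<forall>m\<in>Poly_Mapping.keys q. Poly_Mapping.keys m \<subseteq> V) \<longrightarrow> mpoly_eval q v = 0 \<longrightarrow> q = 0)"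

definition par_idx :: "nat \<Rightarrow> nat \<Rightarrow> (nat \<times> nat) set" where
  "par_idx l1 l2 = {(i,k). (i = 1 \<and> 1 \<le> k \<and> k \<le> l1) \<or> (i = 2 \<and> 1 \<le> k \<and> k \<le> l2)}"

definition laurent_monomials :: "nat \<Rightarrow> nat \<Rightarrow> (nat \<Rightarrow> nat \<Rightarrow> 'a::field) \<Rightarrow> 'a set" where
  "laurent_monomials l1 l2 p =
     {\<Prod>(i,k)\<in>par_idx l1 l2. p i k powi e (i,k) | e. True}"

inductive_set ring_gen :: "'a::comm_ring_1 set \<Rightarrow> 'a set" for S where
  base: "a \<in> S \<Longrightarrow> a \<in> ring_gen S"
| one: "1 \<in> ring_gen S"
| diff: "a \<in> ring_gen S \<Longrightarrow> b \<in> ring_gen S \<Longrightarrow> a - b \<in> ring_gen S"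
| mult: "a \<in> ring_gen S \<Longrightarrow> b \<in> ring_gen S \<Longrightarrow> a * b \<in> ring_gen S"

(* the Z[P]-subalgebra of the field generated by a set T: the subring generated by
   the image of Z[P] (i.e. by the Laurent monomials) together with T *)
definition ZP_alg :: "nat \<Rightarrow> nat \<Rightarrow> (nat \<Rightarrow> nat \<Rightarrow> 'a::field) \<Rightarrow> 'a set \<Rightarrow> 'a set" where
  "ZP_alg l1 l2 p T = ring_gen (laurent_monomials l1 l2 p \<union> T)"

definition Pexch :: "nat \<Rightarrow> (nat \<Rightarrow> 'a::field) \<Rightarrow> 'a \<Rightarrow> 'a" where
  "Pexch l q z = 1 + (\<Sum>k=1..l. q k * z ^ k)"

(* Pbar_i(z) = z^{l_i} P_i(z^{-1}) / p_{i,l_i}, written out (with p_{i,0} = 1) *)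
definition Pbar :: "nat \<Rightarrow> (nat \<Rightarrow> 'a::field) \<Rightarrow> 'a \<Rightarrow> 'a" where
  "Pbar l q z = (\<Sum>k=0..l. (if k = 0 then 1 else q k) * z ^ (l - k)) / q l"

(* exchange polynomial used in x_{k+1} x_{k-1} = E_k(x_k) *)
definition exch :: "nat \<Rightarrow> nat \<Rightarrow> (nat \<Rightarrow> nat \<Rightarrow> 'a::field) \<Rightarrow> int \<Rightarrow> 'a \<Rightarrow> 'a" where
  "exch l1 l2 p k z =
     (if k mod 4 = 1 then Pexch l1 (p 1) z
      else if k mod 4 = 2 then Pexch l2 (p 2) z
      else if k mod 4 = 3 then Pbar l1 (p 1) z
      else Pbar l2 (p 2) z)"

(* forward: fwd n = (x_{n+1}, x_{n+2}) *)
fun fwd :: "nat \<Rightarrow> nat \<Rightarrow> (nat \<Rightarrow> nat \<Rightarrow> 'a::field) \<Rightarrow> 'a \<Rightarrow> 'a \<Rightarrow> nat \<Rightarrow> 'a \<times> 'a" where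
  "fwd l1 l2 p a b 0 = (a, b)"
| "fwd l1 l2 p a b (Suc n) =
     (let (u, w) = fwd l1 l2 p a b n in (w, exch l1 l2 p (int n + 2) w / u))"

(* backward: bwd n = (x_{2-n}, x_{1-n}) *)
fun bwd :: "nat \<Rightarrow> nat \<Rightarrow> (nat \<Rightarrow> nat \<Rightarrow> 'a::field) \<Rightarrow> 'a \<Rightarrow> 'a \<Rightarrow> nat \<Rightarrow> 'a \<times> 'a" where
  "bwd l1 l2 p a b 0 = (b, a)"
| "bwd l1 l2 p a b (Suc n) =
     (let (u, w) = bwd l1 l2 p a b n in (w, exch l1 l2 p (1 - int n) w / u))"

definition xseq :: "nat \<Rightarrow> nat \<Rightarrow> (nat \<Rightarrow> nat \<Rightarrow> 'a::field) \<Rightarrow> 'a \<Rightarrow> 'a \<Rightarrow> int \<Rightarrow> 'a" where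
  "xseq l1 l2 p a b k =
     (if k \<ge> 1 then fst (fwd l1 l2 p a b (nat (k - 1)))
      else snd (bwd l1 l2 p a b (nat (1 - k))))"

definition gen_vars :: "nat \<Rightarrow> nat \<Rightarrow> var set" where
  "gen_vars l1 l2 = {PV i k | i k. (i,k) \<in> par_idx l1 l2} \<union> {XV 1, XV 2}"

definition var_val :: "(nat \<Rightarrow> nat \<Rightarrow> 'a) \<Rightarrow> 'a \<Rightarrow> 'a \<Rightarrow> var \<Rightarrow> 'a" where
  "var_val p a b v = (case v of PV i k \<Rightarrow> p i k | XV j \<Rightarrow> (if j = 1 then a else b))"

end

theory Submission
  imports Defs
begin

text \<open>
  Put \<open>y = x\<^bsub>k+1\<^esub>\<close>. Every exchange polynomial has constant term 1, so
  \<open>x\<^sub>k x\<^bsub>k+2\<^esub> = 1 + y T\<close> with \<open>T\<close> in the algebra, i.e. \<open>x\<^bsub>k+2\<^esub>\<close> is an inverse of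
  \<open>x\<^sub>k\<close> modulo \<open>y\<close>. The exchange polynomials \<open>f\<close> at \<open>k\<close> and \<open>h\<close> at \<open>k + 2\<close> are
  reversals of each other up to a unit of \<open>\<int>[P]\<close>: \<open>h(z) = u z\<^sup>d f(1/z)\<close>. Hence modulo \<open>y\<close>,
  \<open>h(x\<^bsub>k+2\<^esub>) \<equiv> u x\<^bsub>k+2\<^esub>\<^sup>d f(x\<^sub>k) = u x\<^bsub>k+2\<^esub>\<^sup>d y x\<^bsub>k-1\<^esub> \<equiv> 0\<close>, and writing out the
  quotient shows that \<open>x\<^bsub>k+3\<^esub> = h(x\<^bsub>k+2\<^esub>) / y\<close> is a polynomial over \<open>\<int>[P]\<close> in
  \<open>x\<^bsub>k-1\<^esub>, \<dots>, x\<^bsub>k+2\<^esub>\<close>. Symmetrically \<open>x\<^bsub>k-1\<^esub>\<close> is one in \<open>x\<^sub>k, \<dots>, x\<^bsub>k+3\<^esub>\<close>, so the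
  algebra generated by four consecutive terms does not depend on \<open>k\<close> and contains every \<open>x\<^sub>j\<close>.

  The divisions are legitimate because the \<open>p\<^bsub>i,k\<^esub>\<close> and all \<open>x\<^sub>j\<close> lie in the semifield
  generated by the algebraically independent \<open>p\<^bsub>i,k\<^esub>, x\<^sub>1, x\<^sub>2\<close>; its elements are quotients
  of polynomials with positive coefficient sum, hence nonzero.
\<close>

lemma ring_gen_zero: "0 \<in> ring_gen S"
  using ring_gen.diff[OF ring_gen.one ring_gen.one] by simp

lemma ring_gen_uminus: "a \<in> ring_gen S \<Longrightarrow> - a \<in> ring_gen S"
  using ring_gen.diff[OF ring_gen_zero] by fastforce

lemma ring_gen_add: "a \<in> ring_gen S \<Longrightarrow> b \<in> ring_gen S \<Longrightarrow> a + b \<in> ring_gen S"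
  using ring_gen.diff[OF _ ring_gen_uminus, of a S b] by simp

lemma ring_gen_sum: "(\<And>i. i \<in> I \<Longrightarrow> f i \<in> ring_gen S) \<Longrightarrow> sum f I \<in> ring_gen S"
  by (induction I rule: infinite_finite_induct) (auto intro: ring_gen_zero ring_gen_add)

lemma ring_gen_power: "a \<in> ring_gen S \<Longrightarrow> a ^ n \<in> ring_gen S"
  by (induction n) (auto intro: ring_gen.one ring_gen.mult)

lemma ring_gen_subset: "T \<subseteq> ring_gen S \<Longrightarrow> ring_gen T \<subseteq> ring_gen S"
proof
  fix a assume T: "T \<subseteq> ring_gen S" and "a \<in> ring_gen T"
  from \<open>a \<in> ring_gen T\<close> show "a \<in> ring_gen S"
    by (induction rule: ring_gen.induct) (use T in \<open>auto intro: ring_gen.intros\<close>)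
qed

lemma ring_gen_mono: "T \<subseteq> S \<Longrightarrow> ring_gen T \<subseteq> ring_gen S"
  by (rule ring_gen_subset) (auto intro: ring_gen.base)

lemma ZP_alg_generator: "t \<in> T \<Longrightarrow> t \<in> ZP_alg l1 l2 p T"
  unfolding ZP_alg_def by (rule ring_gen.base) simp

lemma ZP_alg_mono: "T \<subseteq> U \<Longrightarrow> ZP_alg l1 l2 p T \<subseteq> ZP_alg l1 l2 p U"
  unfolding ZP_alg_def by (rule ring_gen_mono) blast

lemma ZP_alg_subset: "T \<subseteq> ZP_alg l1 l2 p U \<Longrightarrow> ZP_alg l1 l2 p T \<subseteq> ZP_alg l1 l2 p U"
  unfolding ZP_alg_def by (rule ring_gen_subset) (auto intro: ring_gen.base)

definition monomial_eval :: "('v \<Rightarrow>\<^sub>0 nat) \<Rightarrow> ('v \<Rightarrow> 'a::comm_monoid_mult) \<Rightarrow> 'a" where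
  "monomial_eval m v = (\<Prod>i\<in>Poly_Mapping.keys m. v i ^ Poly_Mapping.lookup m i)"

lemma monomial_eval_superset:
  assumes "finite S" "Poly_Mapping.keys m \<subseteq> S"
  shows "monomial_eval m v = (\<Prod>i\<in>S. v i ^ Poly_Mapping.lookup m i)"
  unfolding monomial_eval_def
  by (rule prod.mono_neutral_left) (use assms in \<open>auto simp: in_keys_iff\<close>)

lemma monomial_eval_add: "monomial_eval (m1 + m2) v = monomial_eval m1 v * monomial_eval m2 v"
proof -
  let ?S = "Poly_Mapping.keys m1 \<union> Poly_Mapping.keys m2"
  have "monomial_eval (m1 + m2) v = (\<Prod>i\<in>?S. v i ^ Poly_Mapping.lookup (m1 + m2) i)"
    by (rule monomial_eval_superset[OF _ keys_add]) simp
  also have "\<dots> = (\<Prod>i\<in>?S. v i ^ Poly_Mapping.lookup m1 i) * (\<Prod>i\<in>?S. v i ^ Poly_Mapping.lookup m2 i)"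
    by (simp add: lookup_add power_add prod.distrib)
  also have "\<dots> = monomial_eval m1 v * monomial_eval m2 v"
    using monomial_eval_superset[of ?S m1 v] monomial_eval_superset[of ?S m2 v] by simp
  finally show ?thesis .
qed

lemma mpoly_eval_superset:
  assumes "finite S" "Poly_Mapping.keys q \<subseteq> S"
  shows "mpoly_eval q v = (\<Sum>m\<in>S. of_rat (Poly_Mapping.lookup q m) * monomial_eval m v)"
  unfolding mpoly_eval_def monomial_eval_def[symmetric]
  by (rule sum.mono_neutral_left) (use assms in \<open>auto simp: in_keys_iff\<close>)

lemma mpoly_eval_zero: "mpoly_eval 0 v = 0"
  by (simp add: mpoly_eval_def)

lemma mpoly_eval_add: "mpoly_eval (q1 + q2) v = mpoly_eval q1 v + mpoly_eval q2 v"
proof -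
  let ?S = "Poly_Mapping.keys q1 \<union> Poly_Mapping.keys q2"
  have "finite ?S" by simp
  then show ?thesis
    using mpoly_eval_superset[of ?S "q1 + q2" v] mpoly_eval_superset[of ?S q1 v]
      mpoly_eval_superset[of ?S q2 v] keys_add[of q1 q2]
    by (simp add: lookup_add of_rat_add distrib_right sum.distrib)
qed

lemma mpoly_eval_sum: "mpoly_eval (sum f I) v = (\<Sum>i\<in>I. mpoly_eval (f i) v)"
  by (induction I rule: infinite_finite_induct) (auto simp: mpoly_eval_zero mpoly_eval_add)

lemma mpoly_eval_single:
  "mpoly_eval (Poly_Mapping.single m c) v = of_rat c * monomial_eval m v"
  by (simp add: mpoly_eval_def monomial_eval_def)

lemma poly_mapping_sum_single:
  "q = (\<Sum>m\<in>Poly_Mapping.keys q. Poly_Mapping.single m (Poly_Mapping.lookup q m))"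
  by (rule poly_mapping_eqI) (auto simp: lookup_sum lookup_single when_def in_keys_iff)

lemma mpoly_eval_mult: "mpoly_eval (q1 * q2) v = mpoly_eval q1 v * mpoly_eval q2 v"
proof -
  let ?K1 = "Poly_Mapping.keys q1" and ?K2 = "Poly_Mapping.keys q2"
  let ?c1 = "Poly_Mapping.lookup q1" and ?c2 = "Poly_Mapping.lookup q2"
  have "q1 * q2 = (\<Sum>m\<in>?K1. Poly_Mapping.single m (?c1 m)) * (\<Sum>n\<in>?K2. Poly_Mapping.single n (?c2 n))"
    using poly_mapping_sum_single[of q1] poly_mapping_sum_single[of q2] by simp
  also have "\<dots> = (\<Sum>m\<in>?K1. \<Sum>n\<in>?K2. Poly_Mapping.single (m + n) (?c1 m * ?c2 n))"
    by (simp add: sum_product mult_single)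
  finally have "mpoly_eval (q1 * q2) v =
      (\<Sum>m\<in>?K1. \<Sum>n\<in>?K2. (of_rat (?c1 m) * monomial_eval m v) * (of_rat (?c2 n) * monomial_eval n v))"
    by (simp add: mpoly_eval_sum mpoly_eval_single monomial_eval_add of_rat_mult mult_ac)
  also have "\<dots> = mpoly_eval q1 v * mpoly_eval q2 v"
    by (simp add: mpoly_eval_def monomial_eval_def sum_product)
  finally show ?thesis .
qed

lemma mpoly_eval_one: "mpoly_eval 1 v = 1"
  by (simp add: mpoly_eval_def)

definition mpoly_var :: "'v \<Rightarrow> ('v \<Rightarrow>\<^sub>0 nat) \<Rightarrow>\<^sub>0 rat" where
  "mpoly_var i = Poly_Mapping.single (Poly_Mapping.single i 1) 1"

lemma mpoly_eval_var: "mpoly_eval (mpoly_var i) v = v i"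
  by (simp add: mpoly_var_def mpoly_eval_def)

section \<open>Nonvanishing in the semifield of an algebraically independent family\<close>

definition mpoly_vars_in :: "'v set \<Rightarrow> (('v \<Rightarrow>\<^sub>0 nat) \<Rightarrow>\<^sub>0 rat) \<Rightarrow> bool" where
  "mpoly_vars_in V q \<longleftrightarrow> (\<forall>m\<in>Poly_Mapping.keys q. Poly_Mapping.keys m \<subseteq> V)"

lemma mpoly_vars_in_add: "mpoly_vars_in V q1 \<Longrightarrow> mpoly_vars_in V q2 \<Longrightarrow> mpoly_vars_in V (q1 + q2)"
  unfolding mpoly_vars_in_def using keys_add[of q1 q2] by blast

lemma mpoly_vars_in_mult:
  assumes "mpoly_vars_in V q1" "mpoly_vars_in V q2"
  shows "mpoly_vars_in V (q1 * q2)"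
  unfolding mpoly_vars_in_def
proof
  fix m assume "m \<in> Poly_Mapping.keys (q1 * q2)"
  then obtain m1 m2 where "m = m1 + m2" "m1 \<in> Poly_Mapping.keys q1" "m2 \<in> Poly_Mapping.keys q2"
    using keys_mult[of q1 q2] by blast
  with assms keys_add[of m1 m2] show "Poly_Mapping.keys m \<subseteq> V"
    unfolding mpoly_vars_in_def by blast
qed

text \<open>Evaluation at the all-ones point is the sum of the coefficients.\<close>

definition pos_mpoly_on :: "'v set \<Rightarrow> (('v \<Rightarrow>\<^sub>0 nat) \<Rightarrow>\<^sub>0 rat) \<Rightarrow> bool" where
  "pos_mpoly_on V q \<longleftrightarrow> mpoly_vars_in V q \<and> 0 < (mpoly_eval q (\<lambda>_. 1::real))"

lemma pos_mpoly_on_add: "pos_mpoly_on V q1 \<Longrightarrow> pos_mpoly_on V q2 \<Longrightarrow> pos_mpoly_on V (q1 + q2)"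
  unfolding pos_mpoly_on_def by (simp add: mpoly_vars_in_add mpoly_eval_add)

lemma pos_mpoly_on_mult: "pos_mpoly_on V q1 \<Longrightarrow> pos_mpoly_on V q2 \<Longrightarrow> pos_mpoly_on V (q1 * q2)"
  unfolding pos_mpoly_on_def by (simp add: mpoly_vars_in_mult mpoly_eval_mult)

lemma pos_mpoly_on_one: "pos_mpoly_on V 1"
  unfolding pos_mpoly_on_def mpoly_vars_in_def by (simp add: mpoly_eval_one)

lemma pos_mpoly_on_var: "i \<in> V \<Longrightarrow> pos_mpoly_on V (mpoly_var i)"
  unfolding pos_mpoly_on_def mpoly_vars_in_def by (simp add: mpoly_eval_var) (simp add: mpoly_var_def)

lemma pos_mpoly_on_eval_nonzero:
  assumes "alg_indep_on v V" "pos_mpoly_on V q"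
  shows "mpoly_eval q v \<noteq> 0"
proof
  assume "mpoly_eval q v = 0"
  with assms have "q = 0"
    unfolding alg_indep_on_def pos_mpoly_on_def mpoly_vars_in_def by blast
  with assms(2) show False
    unfolding pos_mpoly_on_def by (simp add: mpoly_eval_zero)
qed

inductive_set semifield_gen :: "'a::field set \<Rightarrow> 'a set" for S where
  base: "a \<in> S \<Longrightarrow> a \<in> semifield_gen S"
| one: "1 \<in> semifield_gen S"
| add: "a \<in> semifield_gen S \<Longrightarrow> b \<in> semifield_gen S \<Longrightarrow> a + b \<in> semifield_gen S"
| mult: "a \<in> semifield_gen S \<Longrightarrow> b \<in> semifield_gen S \<Longrightarrow> a * b \<in> semifield_gen S"
| divide: "a \<in> semifield_gen S \<Longrightarrow> b \<in> semifield_gen S \<Longrightarrow> a / b \<in> semifield_gen S"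

lemma semifield_gen_power: "a \<in> semifield_gen S \<Longrightarrow> a ^ n \<in> semifield_gen S"
  by (induction n) (auto intro: semifield_gen.one semifield_gen.mult)

lemma semifield_gen_sum:
  "finite I \<Longrightarrow> I \<noteq> {} \<Longrightarrow> (\<And>i. i \<in> I \<Longrightarrow> f i \<in> semifield_gen S) \<Longrightarrow> sum f I \<in> semifield_gen S"
  by (induction I rule: finite_ne_induct) (auto intro: semifield_gen.add)

lemma semifield_gen_quotient:
  assumes indep: "alg_indep_on v V" and "t \<in> semifield_gen (v ` V)"
  shows "\<exists>N D. pos_mpoly_on V N \<and> pos_mpoly_on V D \<and> t = mpoly_eval N v / mpoly_eval D v"
  using assms(2)
proof induction
  case (base a)
  then obtain i where "i \<in> V" "a = v i" by blast
  then show ?case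
    by (intro exI[of _ "mpoly_var i"] exI[of _ 1])
      (simp add: pos_mpoly_on_var pos_mpoly_on_one mpoly_eval_var mpoly_eval_one)
next
  case one
  show ?case
    by (intro exI[of _ 1]) (simp add: pos_mpoly_on_one mpoly_eval_one)
next
  case (add a b)
  then obtain N1 D1 N2 D2 where h: "pos_mpoly_on V N1" "pos_mpoly_on V D1"
    "pos_mpoly_on V N2" "pos_mpoly_on V D2"
    "a = mpoly_eval N1 v / mpoly_eval D1 v" "b = mpoly_eval N2 v / mpoly_eval D2 v"
    by blast
  have "mpoly_eval D1 v \<noteq> 0" "mpoly_eval D2 v \<noteq> 0"
    using h pos_mpoly_on_eval_nonzero[OF indep] by auto
  with h show ?case
    by (intro exI[of _ "N1 * D2 + N2 * D1"] exI[of _ "D1 * D2"])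
      (simp add: pos_mpoly_on_add pos_mpoly_on_mult mpoly_eval_add mpoly_eval_mult field_simps)
next
  case (mult a b)
  then obtain N1 D1 N2 D2 where h: "pos_mpoly_on V N1" "pos_mpoly_on V D1"
    "pos_mpoly_on V N2" "pos_mpoly_on V D2"
    "a = mpoly_eval N1 v / mpoly_eval D1 v" "b = mpoly_eval N2 v / mpoly_eval D2 v"
    by blast
  then show ?case
    by (intro exI[of _ "N1 * N2"] exI[of _ "D1 * D2"]) (simp add: pos_mpoly_on_mult mpoly_eval_mult)
next
  case (divide a b)
  then obtain N1 D1 N2 D2 where h: "pos_mpoly_on V N1" "pos_mpoly_on V D1"
    "pos_mpoly_on V N2" "pos_mpoly_on V D2"
    "a = mpoly_eval N1 v / mpoly_eval D1 v" "b = mpoly_eval N2 v / mpoly_eval D2 v"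
    by blast
  then show ?case
    by (intro exI[of _ "N1 * D2"] exI[of _ "D1 * N2"]) (simp add: pos_mpoly_on_mult mpoly_eval_mult)
qed

lemma semifield_gen_nonzero:
  assumes "alg_indep_on v V" "t \<in> semifield_gen (v ` V)"
  shows "t \<noteq> 0"
  using semifield_gen_quotient[OF assms] pos_mpoly_on_eval_nonzero[OF assms(1)] by force

section \<open>Exchange polynomials\<close>

lemma Pexch_eq_sum: "q 0 = 1 \<Longrightarrow> Pexch l q t = (\<Sum>j=0..l. q j * t ^ j)"
  unfolding Pexch_def by (simp add: sum.atLeast_Suc_atMost)

lemma Pbar_eq_sum:
  assumes "q 0 = 1"
  shows "Pbar l q t = (\<Sum>j=0..l. (q (l - j) / q l) * t ^ j)"
proof -
  have "Pbar l q t = (\<Sum>k=0..l. q k * t ^ (l - k)) / q l"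
    unfolding Pbar_def using assms by (auto intro!: arg_cong[where f="\<lambda>s. s / q l"] sum.cong)
  also have "(\<Sum>k=0..l. q k * t ^ (l - k)) = (\<Sum>j=0..l. q (l - j) * t ^ j)"
    using sum.atLeastAtMost_rev[of "\<lambda>k. q k * t ^ (l - k)" 0 l] by (auto intro!: sum.cong)
  finally show ?thesis by (simp add: sum_divide_distrib)
qed

lemma sum_power_eq_const_plus:
  fixes c :: "nat \<Rightarrow> 'a::comm_ring_1"
  shows "(\<Sum>j=0..l. c j * y ^ j) = c 0 + y * (\<Sum>j=1..l. c j * y ^ (j - 1))"
proof -
  have "(\<Sum>j=0..l. c j * y ^ j) = c 0 + (\<Sum>j=1..l. c j * y ^ j)"
    by (simp add: sum.atLeast_Suc_atMost)
  also have "(\<Sum>j=1..l. c j * y ^ j) = y * (\<Sum>j=1..l. c j * y ^ (j - 1))"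
    unfolding sum_distrib_left by (rule sum.cong[OF refl]) (auto simp: power_eq_if)
  finally show ?thesis .
qed

lemma Pbar_coeff_mem:
  fixes q :: "nat \<Rightarrow> 'a::field"
  assumes "\<forall>j\<le>l. q j \<in> ring_gen S" "inverse (q l) \<in> ring_gen S"
  shows "\<forall>j\<le>l. q (l - j) / q l \<in> ring_gen S"
proof (intro allI impI)
  fix j assume "j \<le> l"
  have "q (l - j) \<in> ring_gen S" using assms(1) diff_le_self by blast
  then show "q (l - j) / q l \<in> ring_gen S"
    unfolding divide_inverse using assms(2) by (rule ring_gen.mult)
qed

lemma Pexch_eq_1_plus_mult:
  assumes "q 0 = 1" "\<forall>j\<le>l. q j \<in> ring_gen S" "y \<in> ring_gen S"
  shows "\<exists>T\<in>ring_gen S. Pexch l q y = 1 + y * T"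
proof
  show "Pexch l q y = 1 + y * (\<Sum>j=1..l. q j * y ^ (j - 1))"
    using assms(1) by (simp add: Pexch_eq_sum sum_power_eq_const_plus)
  show "(\<Sum>j=1..l. q j * y ^ (j - 1)) \<in> ring_gen S"
    using assms(2,3) by (auto intro!: ring_gen_sum ring_gen.mult ring_gen_power)
qed

lemma Pbar_eq_1_plus_mult:
  assumes "q 0 = 1" "q l \<noteq> 0" "\<forall>j\<le>l. q j \<in> ring_gen S" "inverse (q l) \<in> ring_gen S"
    "y \<in> ring_gen S"
  shows "\<exists>T\<in>ring_gen S. Pbar l q y = 1 + y * T"
proof
  show "Pbar l q y = 1 + y * (\<Sum>j=1..l. (q (l - j) / q l) * y ^ (j - 1))"
    unfolding Pbar_eq_sum[of q, OF assms(1)] sum_power_eq_const_plus using assms(2) by simp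
  show "(\<Sum>j=1..l. (q (l - j) / q l) * y ^ (j - 1)) \<in> ring_gen S"
    using Pbar_coeff_mem[OF assms(3,4)] assms(5)
    by (intro ring_gen_sum ring_gen.mult ring_gen_power) auto
qed

lemma Pexch_semifield_gen:
  assumes "l \<ge> 1" "\<forall>k\<in>{1..l}. q k \<in> semifield_gen S" "t \<in> semifield_gen S"
  shows "Pexch l q t \<in> semifield_gen S"
  unfolding Pexch_def using assms
  by (auto intro!: semifield_gen.add semifield_gen.one semifield_gen_sum semifield_gen.mult
      semifield_gen_power)

lemma Pbar_semifield_gen:
  assumes "l \<ge> 1" "\<forall>k\<in>{1..l}. q k \<in> semifield_gen S" "t \<in> semifield_gen S"
  shows "Pbar l q t \<in> semifield_gen S"
  unfolding Pbar_def using assms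
  by (auto intro!: semifield_gen.divide semifield_gen_sum semifield_gen.mult semifield_gen_power
      semifield_gen.one)

text \<open>If \<open>b z \<equiv> 1\<close> modulo \<open>y\<close>, then \<open>h(z) \<equiv> u z\<^sup>d f(b)\<close> modulo \<open>y\<close> for the reversal
  \<open>h\<close> of \<open>f\<close>; the inner sums divide \<open>(b z)\<^sup>j - 1\<close> by \<open>b z - 1 = y T\<close>.\<close>

lemma reversed_exchange_eq:
  fixes a b y z w u T :: "'a::field"
  assumes y: "y \<noteq> 0" and ya: "y * a = (\<Sum>j=0..d. f j * b ^ j)" and bz: "b * z = 1 + y * T"
    and yw: "y * w = (\<Sum>j=0..d. h j * z ^ j)" and rev: "\<forall>j\<le>d. h (d - j) = u * f j"
  shows "w = u * z ^ d * a - T * (\<Sum>j=0..d. h (d - j) * z ^ (d - j) * (\<Sum>i<j. (b * z) ^ i))"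
proof -
  have zd_f: "u * z ^ d * (y * a) = (\<Sum>j=0..d. h (d - j) * z ^ (d - j) * (b * z) ^ j)"
    unfolding ya sum_distrib_left
  proof (rule sum.cong[OF refl])
    fix j assume "j \<in> {0..d}"
    then have "j \<le> d" by simp
    then have "z ^ d = z ^ (d - j) * z ^ j" by (simp flip: power_add)
    with rev \<open>j \<le> d\<close> show "u * z ^ d * (f j * b ^ j) = h (d - j) * z ^ (d - j) * (b * z) ^ j"
      by (simp add: power_mult_distrib mult_ac)
  qed
  have geometric: "(y * T) * (\<Sum>i<j. (b * z) ^ i) = (b * z) ^ j - 1" for j
    using bz power_diff_1_eq[of "b * z" j] by (simp add: algebra_simps)
  have "y * (u * z ^ d * a - T * (\<Sum>j=0..d. h (d - j) * z ^ (d - j) * (\<Sum>i<j. (b * z) ^ i)))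
     = u * z ^ d * (y * a) - (\<Sum>j=0..d. h (d - j) * z ^ (d - j) * ((y * T) * (\<Sum>i<j. (b * z) ^ i)))"
    by (simp add: sum_distrib_left algebra_simps)
  also have "\<dots> = (\<Sum>j=0..d. h (d - j) * z ^ (d - j) * (b * z) ^ j)
        - (\<Sum>j=0..d. h (d - j) * z ^ (d - j) * ((b * z) ^ j - 1))"
    unfolding zd_f geometric ..
  also have "\<dots> = (\<Sum>j=0..d. h (d - j) * z ^ (d - j))"
    by (simp add: sum_subtractf[symmetric] algebra_simps)
  also have "\<dots> = (\<Sum>j=0..d. h j * z ^ j)"
    using sum.atLeastAtMost_rev[of "\<lambda>j. h j * z ^ j" 0 d] by simp
  also have "\<dots> = y * w" using yw by simp
  finally show ?thesis using y by simp
qed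

lemma reversed_exchange_mem:
  fixes a b y z w u T :: "'a::field"
  assumes "y \<noteq> 0" "y * a = (\<Sum>j=0..d. f j * b ^ j)" "b * z = 1 + y * T"
    and "y * w = (\<Sum>j=0..d. h j * z ^ j)" "\<forall>j\<le>d. h (d - j) = u * f j"
    and "a \<in> ring_gen S" "b \<in> ring_gen S" "z \<in> ring_gen S" "u \<in> ring_gen S" "T \<in> ring_gen S"
      "\<forall>j\<le>d. h j \<in> ring_gen S"
  shows "w \<in> ring_gen S"
  unfolding reversed_exchange_eq[OF assms(1-5)] using assms(6-)
  by (auto intro!: ring_gen.diff ring_gen.mult ring_gen_power ring_gen_sum)

lemma exchange_step_Pexch_Pbar:
  assumes q: "q 0 = 1" "\<forall>j\<le>l. q j \<in> ring_gen S" "inverse (q l) \<in> ring_gen S"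
    and y: "y \<noteq> 0" and ya: "y * a = Pexch l q b" and bz: "b * z = 1 + y * T"
    and yw: "y * w = Pbar l q z"
    and mem: "a \<in> ring_gen S" "b \<in> ring_gen S" "z \<in> ring_gen S" "T \<in> ring_gen S"
  shows "w \<in> ring_gen S"
proof (rule reversed_exchange_mem[OF y _ bz _ _ mem(1-3) q(3) mem(4)])
  show "y * a = (\<Sum>j=0..l. q j * b ^ j)" using ya q(1) by (simp add: Pexch_eq_sum)
  show "y * w = (\<Sum>j=0..l. (q (l - j) / q l) * z ^ j)" using yw q(1) by (simp add: Pbar_eq_sum)
  show "\<forall>j\<le>l. q (l - (l - j)) / q l = inverse (q l) * q j" by (simp add: divide_inverse mult_ac)
  show "\<forall>j\<le>l. q (l - j) / q l \<in> ring_gen S" by (rule Pbar_coeff_mem[OF q(2,3)])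
qed

lemma exchange_step_Pbar_Pexch:
  assumes q: "q 0 = 1" "q l \<noteq> 0" "\<forall>j\<le>l. q j \<in> ring_gen S"
    and y: "y \<noteq> 0" and ya: "y * a = Pbar l q b" and bz: "b * z = 1 + y * T"
    and yw: "y * w = Pexch l q z"
    and mem: "a \<in> ring_gen S" "b \<in> ring_gen S" "z \<in> ring_gen S" "T \<in> ring_gen S"
  shows "w \<in> ring_gen S"
proof (rule reversed_exchange_mem[OF y _ bz _ _ mem(1-3) _ mem(4) q(3)])
  show "y * a = (\<Sum>j=0..l. (q (l - j) / q l) * b ^ j)" using ya q(1) by (simp add: Pbar_eq_sum)
  show "y * w = (\<Sum>j=0..l. q j * z ^ j)" using yw q(1) by (simp add: Pexch_eq_sum)
  show "\<forall>j\<le>l. q (l - j) = q l * (q (l - j) / q l)" using q(2) by simp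
  show "q l \<in> ring_gen S" using q(3) by simp
qed

lemma exch_opposite:
  assumes "k' mod 4 = (k + 2) mod 4"
  obtains i l where "(i, l) \<in> {(1, l1), (2, l2)}"
      "exch l1 l2 p k = Pexch l (p i)" "exch l1 l2 p k' = Pbar l (p i)"
    | i l where "(i, l) \<in> {(1, l1), (2, l2)}"
      "exch l1 l2 p k = Pbar l (p i)" "exch l1 l2 p k' = Pexch l (p i)"
proof -
  have "k mod 4 = 0 \<and> k' mod 4 = 2 \<or> k mod 4 = 1 \<and> k' mod 4 = 3
    \<or> k mod 4 = 2 \<and> k' mod 4 = 0 \<or> k mod 4 = 3 \<and> k' mod 4 = 1"
    using assms by presburger
  then show thesis
  proof (elim disjE conjE)
    assume "k mod 4 = 0" "k' mod 4 = 2"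
    then show thesis by (intro that(2)[of 2 l2]) (auto simp: exch_def fun_eq_iff)
  next
    assume "k mod 4 = 1" "k' mod 4 = 3"
    then show thesis by (intro that(1)[of 1 l1]) (auto simp: exch_def fun_eq_iff)
  next
    assume "k mod 4 = 2" "k' mod 4 = 0"
    then show thesis by (intro that(1)[of 2 l2]) (auto simp: exch_def fun_eq_iff)
  next
    assume "k mod 4 = 3" "k' mod 4 = 1"
    then show thesis by (intro that(2)[of 1 l1]) (auto simp: exch_def fun_eq_iff)
  qed
qed

lemma exch_cases:
  "exch l1 l2 p k \<in> {Pexch l1 (p 1), Pexch l2 (p 2), Pbar l1 (p 1), Pbar l2 (p 2)}"
  unfolding exch_def by (auto simp: fun_eq_iff)

lemma finite_par_idx: "finite (par_idx l1 l2)"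
proof -
  have "par_idx l1 l2 = {1} \<times> {1..l1} \<union> {2} \<times> {1..l2}"
    unfolding par_idx_def by auto
  then show ?thesis by simp
qed

lemma laurent_monomials_power_int:
  assumes "(i, k) \<in> par_idx l1 l2"
  shows "p i k powi n \<in> laurent_monomials l1 l2 p"
proof -
  let ?e = "\<lambda>z. if z = (i, k) then n else 0"
  have "(\<Prod>(i', k')\<in>par_idx l1 l2. p i' k' powi ?e (i', k'))
      = (\<Prod>z\<in>par_idx l1 l2. if z = (i, k) then p i k powi n else 1)"
    by (rule prod.cong[OF refl]) (clarify, simp split: if_split)
  also have "\<dots> = p i k powi n"
    using assms by (simp add: prod.delta[OF finite_par_idx])
  finally show ?thesis
    unfolding laurent_monomials_def mem_Collect_eq by (intro exI[of _ ?e]) simp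
qed

section \<open>The sequence \<open>x\<^sub>k\<close>\<close>

lemma xseq_fwd:
  "xseq l1 l2 p a b (int n + 1) = fst (fwd l1 l2 p a b n)"
  "xseq l1 l2 p a b (int n + 2) = snd (fwd l1 l2 p a b n)"
proof -
  show "xseq l1 l2 p a b (int n + 1) = fst (fwd l1 l2 p a b n)"
    by (simp add: xseq_def)
  have "xseq l1 l2 p a b (int n + 2) = fst (fwd l1 l2 p a b (Suc n))"
    by (simp add: xseq_def nat_add_distrib)
  then show "xseq l1 l2 p a b (int n + 2) = snd (fwd l1 l2 p a b n)"
    by (simp add: case_prod_beta Let_def)
qed

lemma xseq_bwd:
  "xseq l1 l2 p a b (1 - int n) = snd (bwd l1 l2 p a b n)"
  "xseq l1 l2 p a b (2 - int n) = fst (bwd l1 l2 p a b n)"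
proof -
  show snd: "xseq l1 l2 p a b (1 - int n) = snd (bwd l1 l2 p a b n)" for n
    by (cases "n = 0") (simp_all add: xseq_def)
  show "xseq l1 l2 p a b (2 - int n) = fst (bwd l1 l2 p a b n)"
  proof (cases n)
    case 0 then show ?thesis by (simp add: xseq_def)
  next
    case (Suc m)
    then have "xseq l1 l2 p a b (2 - int n) = snd (bwd l1 l2 p a b m)"
      using snd[of m] by (simp add: algebra_simps)
    with Suc show ?thesis by (simp add: case_prod_beta Let_def)
  qed
qed

lemma xseq_forward:
  assumes "j \<ge> 2"
  shows "xseq l1 l2 p a b (j + 1) = exch l1 l2 p j (xseq l1 l2 p a b j) / xseq l1 l2 p a b (j - 1)"
proof -
  obtain n where n: "j = int n + 2" using assms by (intro that[of "nat (j - 2)"]) simp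
  then have "j + 1 = int (Suc n) + 2" "j - 1 = int n + 1" by simp_all
  with n show ?thesis by (simp only: xseq_fwd) (simp add: case_prod_beta Let_def)
qed

lemma xseq_backward:
  assumes "j \<le> 1"
  shows "xseq l1 l2 p a b (j - 1) = exch l1 l2 p j (xseq l1 l2 p a b j) / xseq l1 l2 p a b (j + 1)"
proof -
  obtain n where n: "j = 1 - int n" using assms by (intro that[of "nat (1 - j)"]) simp
  then have "j - 1 = 1 - int (Suc n)" "j + 1 = 2 - int n" by simp_all
  with n show ?thesis by (simp only: xseq_bwd) (simp add: case_prod_beta Let_def)
qed

definition xseq_window :: "nat \<Rightarrow> nat \<Rightarrow> (nat \<Rightarrow> nat \<Rightarrow> 'a::field) \<Rightarrow> 'a \<Rightarrow> 'a \<Rightarrow> int \<Rightarrow> 'a set" where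
  "xseq_window l1 l2 p a b k =
     {xseq l1 l2 p a b (k - 1), xseq l1 l2 p a b k, xseq l1 l2 p a b (k + 1), xseq l1 l2 p a b (k + 2)}"

context
  fixes l1 l2 :: nat and p :: "nat \<Rightarrow> nat \<Rightarrow> 'a::field_char_0" and x1 x2 :: 'a
  assumes l1: "l1 \<ge> 1" and l2: "l2 \<ge> 1" and p10: "p 1 0 = 1" and p20: "p 2 0 = 1"
    and indep: "alg_indep_on (var_val p x1 x2) (gen_vars l1 l2)"
begin

abbreviation X :: "int \<Rightarrow> 'a" where
  "X \<equiv> xseq l1 l2 p x1 x2"

abbreviation SF :: "'a set" where
  "SF \<equiv> semifield_gen (var_val p x1 x2 ` gen_vars l1 l2)"

lemma var_val_mem_SF: "v \<in> gen_vars l1 l2 \<Longrightarrow> var_val p x1 x2 v \<in> SF"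
  by (rule semifield_gen.base) (rule imageI)

lemma p_mem_SF: "(i, k) \<in> par_idx l1 l2 \<Longrightarrow> p i k \<in> SF"
  using var_val_mem_SF[of "PV i k"] by (auto simp: gen_vars_def var_val_def)

lemma x1_mem_SF: "x1 \<in> SF" and x2_mem_SF: "x2 \<in> SF"
  using var_val_mem_SF[of "XV 1"] var_val_mem_SF[of "XV 2"] by (auto simp: gen_vars_def var_val_def)

lemma exch_mem_SF: "t \<in> SF \<Longrightarrow> exch l1 l2 p k t \<in> SF"
proof -
  assume t: "t \<in> SF"
  have p1: "\<forall>k\<in>{1..l1}. p 1 k \<in> SF" and p2: "\<forall>k\<in>{1..l2}. p 2 k \<in> SF"
    by (auto intro!: p_mem_SF simp: par_idx_def)
  show ?thesis
    using exch_cases[of l1 l2 p k] Pexch_semifield_gen[OF l1 p1 t] Pexch_semifield_gen[OF l2 p2 t]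
      Pbar_semifield_gen[OF l1 p1 t] Pbar_semifield_gen[OF l2 p2 t] by auto
qed

lemma fwd_mem_SF: "fst (fwd l1 l2 p x1 x2 n) \<in> SF \<and> snd (fwd l1 l2 p x1 x2 n) \<in> SF"
proof (induction n)
  case 0 then show ?case by (simp add: x1_mem_SF x2_mem_SF)
next
  case (Suc n) then show ?case
    by (cases "fwd l1 l2 p x1 x2 n") (simp add: semifield_gen.divide exch_mem_SF)
qed

lemma bwd_mem_SF: "fst (bwd l1 l2 p x1 x2 n) \<in> SF \<and> snd (bwd l1 l2 p x1 x2 n) \<in> SF"
proof (induction n)
  case 0 then show ?case by (simp add: x1_mem_SF x2_mem_SF)
next
  case (Suc n) then show ?case
    by (cases "bwd l1 l2 p x1 x2 n") (simp add: semifield_gen.divide exch_mem_SF)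
qed

lemma xseq_nonzero: "X k \<noteq> 0"
  unfolding xseq_def using fwd_mem_SF bwd_mem_SF semifield_gen_nonzero[OF indep] by auto

lemma p_nonzero: "(i, k) \<in> par_idx l1 l2 \<Longrightarrow> p i k \<noteq> 0"
  using p_mem_SF semifield_gen_nonzero[OF indep] by blast

lemma xseq_exchange: "X (k - 1) * X (k + 1) = exch l1 l2 p k (X k)"
proof (cases "k \<ge> 2")
  case True
  then show ?thesis using xseq_forward[OF True, of l1 l2 p x1 x2] xseq_nonzero[of "k - 1"] by simp
next
  case False
  then show ?thesis using xseq_backward[of k l1 l2 p x1 x2] xseq_nonzero[of "k + 1"] by simp
qed

lemma exch_coeffs:
  assumes "laurent_monomials l1 l2 p \<subseteq> S" and il: "(i, l) \<in> {(1, l1), (2, l2)}"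
  shows "p i 0 = 1" "p i l \<noteq> 0" "\<forall>j\<le>l. p i j \<in> ring_gen S" "inverse (p i l) \<in> ring_gen S"
proof -
  have idx: "(i, j) \<in> par_idx l1 l2" if "1 \<le> j" "j \<le> l" for j
    using il that unfolding par_idx_def by auto
  have "1 \<le> l" using il l1 l2 by auto
  have in_S: "p i j powi n \<in> ring_gen S" if "1 \<le> j" "j \<le> l" for j n
    using laurent_monomials_power_int[OF idx[OF that]] assms(1) by (auto intro: ring_gen.base)
  show "p i 0 = 1" using il p10 p20 by auto
  show "p i l \<noteq> 0" using p_nonzero idx \<open>1 \<le> l\<close> by blast
  show "\<forall>j\<le>l. p i j \<in> ring_gen S"
    using in_S[of _ 1] \<open>p i 0 = 1\<close> by (metis less_one not_le ring_gen.one power_int_1_right)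
  show "inverse (p i l) \<in> ring_gen S"
    using in_S[of l "-1"] \<open>1 \<le> l\<close> by (simp add: power_int_minus)
qed

lemma exch_eq_1_plus_mult:
  assumes S: "laurent_monomials l1 l2 p \<subseteq> S" and y: "y \<in> ring_gen S"
  shows "\<exists>T\<in>ring_gen S. exch l1 l2 p m y = 1 + y * T"
proof -
  have Pexch: "\<exists>T\<in>ring_gen S. Pexch l (p i) y = 1 + y * T"
    and Pbar: "\<exists>T\<in>ring_gen S. Pbar l (p i) y = 1 + y * T"
    if "(i, l) \<in> {(1, l1), (2, l2)}" for i l
    using Pexch_eq_1_plus_mult[OF exch_coeffs(1,3)[OF S that] y]
      Pbar_eq_1_plus_mult[OF exch_coeffs[OF S that] y] by auto
  show ?thesis
    using exch_cases[of l1 l2 p m] Pexch[of 1 l1] Pexch[of 2 l2] Pbar[of 1 l1] Pbar[of 2 l2] by auto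
qed

lemma exchange_step_mem:
  assumes S: "laurent_monomials l1 l2 p \<subseteq> S"
    and y: "y \<noteq> 0" and ya: "y * a = exch l1 l2 p k b" and bz: "b * z = exch l1 l2 p m y"
    and yw: "y * w = exch l1 l2 p k' z" and kk: "k' mod 4 = (k + 2) mod 4"
    and mem: "a \<in> ring_gen S" "b \<in> ring_gen S" "y \<in> ring_gen S" "z \<in> ring_gen S"
  shows "w \<in> ring_gen S"
proof -
  obtain T where T: "T \<in> ring_gen S" "b * z = 1 + y * T"
    using exch_eq_1_plus_mult[OF S mem(3), of m] bz by auto
  from kk show ?thesis
  proof (cases rule: exch_opposite[where ?l1.0 = l1 and ?l2.0 = l2 and p = p])
    case (1 i l)
    note q = exch_coeffs[OF S 1(1)]
    show ?thesis
      by (rule exchange_step_Pexch_Pbar[OF q(1,3,4) y _ T(2) _ mem(1,2,4) T(1)])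
        (use ya yw 1 in simp_all)
  next
    case (2 i l)
    note q = exch_coeffs[OF S 2(1)]
    show ?thesis
      by (rule exchange_step_Pbar_Pexch[OF q(1,2,3) y _ T(2) _ mem(1,2,4) T(1)])
        (use ya yw 2 in simp_all)
  qed
qed

lemma xseq_exchanges:
  "X (k + 1) * X (k - 1) = exch l1 l2 p k (X k)"
  "X k * X (k + 2) = exch l1 l2 p (k + 1) (X (k + 1))"
  "X (k + 2) * X k = exch l1 l2 p (k + 1) (X (k + 1))"
  "X (k + 1) * X (k + 3) = exch l1 l2 p (k + 2) (X (k + 2))"
proof -
  have shifts: "k + 1 - 1 = k" "k + 1 + 1 = k + 2" "k + 2 - 1 = k + 1" "k + 2 + 1 = k + 3"
    by simp_all
  show "X (k + 1) * X (k - 1) = exch l1 l2 p k (X k)"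
    using xseq_exchange[of k] by (simp only: mult.commute)
  show middle: "X k * X (k + 2) = exch l1 l2 p (k + 1) (X (k + 1))"
    using xseq_exchange[of "k + 1"] unfolding shifts .
  then show "X (k + 2) * X k = exch l1 l2 p (k + 1) (X (k + 1))"
    by (simp only: mult.commute)
  show "X (k + 1) * X (k + 3) = exch l1 l2 p (k + 2) (X (k + 2))"
    using xseq_exchange[of "k + 2"] unfolding shifts .
qed

lemma xseq_next_mem: "X (k + 3) \<in> ZP_alg l1 l2 p (xseq_window l1 l2 p x1 x2 k)"
  unfolding ZP_alg_def xseq_window_def
  by (rule exchange_step_mem[where k = k and m = "k + 1" and k' = "k + 2"
        and a = "X (k - 1)" and b = "X k" and y = "X (k + 1)" and z = "X (k + 2)"])
     (auto simp: xseq_nonzero xseq_exchanges intro: ring_gen.base)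

lemma xseq_prev_mem: "X (k - 1) \<in> ZP_alg l1 l2 p (xseq_window l1 l2 p x1 x2 (k + 1))"
  unfolding ZP_alg_def xseq_window_def
  by (rule exchange_step_mem[where k = "k + 2" and m = "k + 1" and k' = k
        and a = "X (k + 3)" and b = "X (k + 2)" and y = "X (k + 1)" and z = "X k"])
     (auto simp: xseq_nonzero xseq_exchanges add.assoc intro: ring_gen.base)

lemma ZP_alg_window_shift:
  "ZP_alg l1 l2 p (xseq_window l1 l2 p x1 x2 (k + 1)) = ZP_alg l1 l2 p (xseq_window l1 l2 p x1 x2 k)"
proof
  have "xseq_window l1 l2 p x1 x2 (k + 1) \<subseteq> ZP_alg l1 l2 p (xseq_window l1 l2 p x1 x2 k)"
    using xseq_next_mem[of k]
    by (auto simp: xseq_window_def add.assoc intro: ZP_alg_generator)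
  then show "ZP_alg l1 l2 p (xseq_window l1 l2 p x1 x2 (k + 1)) \<subseteq> ZP_alg l1 l2 p (xseq_window l1 l2 p x1 x2 k)"
    by (rule ZP_alg_subset)
  have "xseq_window l1 l2 p x1 x2 k \<subseteq> ZP_alg l1 l2 p (xseq_window l1 l2 p x1 x2 (k + 1))"
    using xseq_prev_mem[of k]
    by (auto simp: xseq_window_def add.assoc intro: ZP_alg_generator)
  then show "ZP_alg l1 l2 p (xseq_window l1 l2 p x1 x2 k) \<subseteq> ZP_alg l1 l2 p (xseq_window l1 l2 p x1 x2 (k + 1))"
    by (rule ZP_alg_subset)
qed

end

lemma shift_invariant_int_const:
  fixes f :: "int \<Rightarrow> 'b"
  assumes "\<And>k. f (k + 1) = f k"
  shows "f j = f 0"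
proof (induction j rule: int_induct[where k = 0])
  case (step2 i)
  then show ?case using assms[of "i - 1"] by simp
qed (use assms in simp_all)

theorem theoremA2:
  fixes l1 l2 :: nat and p :: "nat \<Rightarrow> nat \<Rightarrow> 'a::field_char_0" and x1 x2 :: 'a
  assumes "l1 \<ge> 1" and "l2 \<ge> 1"
    and "p 1 0 = 1" and "p 2 0 = 1"
    and "alg_indep_on (var_val p x1 x2) (gen_vars l1 l2)"
  shows "\<forall>k::int. ZP_alg l1 l2 p (range (xseq l1 l2 p x1 x2)) =
           ZP_alg l1 l2 p {xseq l1 l2 p x1 x2 (k - 1), xseq l1 l2 p x1 x2 k,
                           xseq l1 l2 p x1 x2 (k + 1), xseq l1 l2 p x1 x2 (k + 2)}"
proof
  fix k :: int
  let ?x = "xseq l1 l2 p x1 x2" and ?A = "\<lambda>k. ZP_alg l1 l2 p (xseq_window l1 l2 p x1 x2 k)"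
  have window_const: "?A j = ?A k" for j
    using shift_invariant_int_const[of ?A, OF ZP_alg_window_shift[OF assms]] by metis
  have "range ?x \<subseteq> ?A k"
  proof
    fix t assume "t \<in> range ?x"
    then obtain j where "t = ?x j" by blast
    then have "t \<in> ?A j" by (auto simp: xseq_window_def intro: ZP_alg_generator)
    with window_const[of j] show "t \<in> ?A k" by simp
  qed
  then have "ZP_alg l1 l2 p (range ?x) \<subseteq> ?A k" by (rule ZP_alg_subset)
  moreover have "?A k \<subseteq> ZP_alg l1 l2 p (range ?x)"
    unfolding xseq_window_def by (rule ZP_alg_mono) auto
  ultimately show "ZP_alg l1 l2 p (range ?x) = ZP_alg l1 l2 p {?x (k - 1), ?x k, ?x (k + 1), ?x (k + 2)}"
    unfolding xseq_window_def by blast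
qed

end
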